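(* Let $t\ge 2$ and let $n$ be an integer with $2^{t-1}-1\le n\le 2^t-3$; put $i=2^t-3-n$ and $j=n-2^{t-1}+1$. Then in $\mathbb{F}_2[w_2,w_3]$: \begin{align*} w_3r_{j-2}q_i+r_{j-1}q_{i+1}&=q_{n-2},\\ r_jq_i+w_3r_{j-1}q_{i-1}&=q_{n-1},\\ r_jq_{i+1}+w_3^2r_{j-2}q_{i-1}&=q_n. \end{align*}
   Context: In $\mathbb{F}_2[w_2,w_3]$: $q_0=1$, $q_m=0$ for $m<0$, $q_m=w_2q_{m-2}+w_3q_{m-3}$ for $m\ge1$; $r_0=1$, $r_m=0$ for $m<0$, $r_{m+1}=w_2r_m+w_3^2r_{m-2}$ for $m\ge0$. *)

theory Defs
  imports "HOL-Library.Z2" "HOL-Computational_Algebra.Polynomial"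
begin

text \<open>F_2[w2,w3] is modelled as (F_2[w2])[w3], i.e. bit poly poly:
  the inner variable is w2, the outer variable is w3.\<close>

type_synonym F2poly2 = "bit poly poly"

definition w2 :: F2poly2 where "w2 = [:[:0, 1:]:]"
definition w3 :: F2poly2 where "w3 = [:0, 1:]"

function q :: "int \<Rightarrow> F2poly2" where
  "q m = (if m < 0 then 0 else if m = 0 then 1
          else w2 * q (m - 2) + w3 * q (m - 3))"
  by pat_completeness auto
termination by (relation "measure (\<lambda>m. nat (m + 3))") auto

function r :: "int \<Rightarrow> F2poly2" where
  "r m = (if m < 0 then 0 else if m = 0 then 1
          else w2 * r (m - 1) + w3\<^sup>2 * r (m - 3))"
  by pat_completeness auto
termination by (relation "measure (\<lambda>m. nat (m + 3))") auto

declare q.simps[simp del] r.simps[simp del]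

end

theory Submission
  imports Defs
begin

text \<open>Over \<open>\<bbbF>\<^sub>2\<close> the recurrence for \<open>q\<close> yields the doubling formulas
  \<open>q(2k) = q(k)\<^sup>2 + w\<^sub>2 q(k-1)\<^sup>2\<close> and \<open>q(2k+1) = w\<^sub>3 q(k-1)\<^sup>2\<close>; iterating the odd one from
  \<open>q(-2) = 0\<close> gives \<open>q(2\<^sup>s - 3) = 0\<close>. With \<open>K = 2^(t-1) - 2\<close> we have \<open>i = K - j\<close> and
  \<open>n = K + j + 1\<close>, and the three identities follow by induction on \<open>j\<close> for any \<open>K\<close> with
  \<open>q(K-1) = 0\<close>: for \<open>j = 0\<close> the first identity is exactly \<open>q(K-1) = 0\<close> and the other two
  are trivial, while the step only uses the recurrences of \<open>r\<close> and \<open>q\<close>.\<close>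

text \<open>In characteristic two an identity need only be checked up to an even multiple; this is how
  the cross terms below are discarded, \<open>c\<close> being the cross term.\<close>

lemma eq_if_plus_2_times_eq: "a + 2 * c = b \<Longrightarrow> a = (b::F2poly2)"
  by (simp add: numeral_poly)

lemma q_neg: "m < 0 \<Longrightarrow> q m = 0"
  by (subst q.simps) simp

lemma q_0: "q 0 = 1"
  by (subst q.simps) simp

lemma q_rec: "m \<ge> 1 \<Longrightarrow> q m = w2 * q (m - 2) + w3 * q (m - 3)"
  by (subst q.simps) simp

lemma r_neg: "m < 0 \<Longrightarrow> r m = 0"
  by (subst r.simps) simp

lemma r_0: "r 0 = 1"
  by (subst r.simps) simp

lemma r_rec: "m \<ge> 1 \<Longrightarrow> r m = w2 * r (m - 1) + w3\<^sup>2 * r (m - 3)"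
  by (subst r.simps) simp

lemma q_doubling:
  "q (2 * k) = (q k)\<^sup>2 + w2 * (q (k - 1))\<^sup>2 \<and> q (2 * k + 1) = w3 * (q (k - 1))\<^sup>2"
proof (induction "nat k" arbitrary: k rule: less_induct)
  case less
  consider (neg) "k < 0" | (zero) "k = 0" | (pos) "k \<ge> 1" by linarith
  then show ?case
  proof cases
    case neg
    then show ?thesis by (simp add: q_neg)
  next
    case zero
    then show ?thesis by (simp add: q_neg q_0 q_rec[of 1])
  next
    case pos
    have doubling_pred: "q (2 * k - 2) = (q (k - 1))\<^sup>2 + w2 * (q (k - 2))\<^sup>2"
               "q (2 * k - 1) = w3 * (q (k - 2))\<^sup>2"
      using less[of "k - 1"] pos by (simp_all add: algebra_simps)
    have doubling_pred2: "q (2 * k - 3) = w3 * (q (k - 3))\<^sup>2"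
      using less[of "k - 2"] pos by (simp add: algebra_simps)
    have rec: "q (2 * k) = w2 * q (2 * k - 2) + w3 * q (2 * k - 3)"
              "q (2 * k + 1) = w2 * q (2 * k - 1) + w3 * q (2 * k - 2)"
              "q k = w2 * q (k - 2) + w3 * q (k - 3)"
      using q_rec[of "2 * k"] q_rec[of "2 * k + 1"] q_rec[of k] pos by simp_all
    have "q (2 * k) = (q k)\<^sup>2 + w2 * (q (k - 1))\<^sup>2"
      by (rule eq_if_plus_2_times_eq[where c = "w2 * w3 * q (k - 2) * q (k - 3)"],
          unfold rec doubling_pred doubling_pred2) algebra
    moreover have "q (2 * k + 1) = w3 * (q (k - 1))\<^sup>2"
      by (rule sym, rule eq_if_plus_2_times_eq[where c = "w2 * w3 * (q (k - 2))\<^sup>2"],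
          unfold rec doubling_pred) algebra
    ultimately show ?thesis ..
  qed
qed

lemma q_two_power_minus_3: "q (2 ^ s - 3) = 0"
proof (induction s)
  case 0
  then show ?case by (simp add: q_neg)
next
  case (Suc s)
  have "q (2 ^ Suc s - 3) = q (2 * (2 ^ s - 2) + 1)"
    by simp
  also have "\<dots> = w3 * (q (2 ^ s - 3))\<^sup>2"
    using q_doubling[of "2 ^ s - 2"] by (simp add: algebra_simps)
  finally show ?case
    using Suc by simp
qed

lemma q_r_identities:
  fixes K j :: int
  assumes "q (K - 1) = 0" and "0 \<le> j" and "j \<le> K"
  shows "w3 * r (j - 2) * q (K - j) + r (j - 1) * q (K - j + 1) = q (K + j - 1) \<and>
         r j * q (K - j) + w3 * r (j - 1) * q (K - j - 1) = q (K + j) \<and>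
         r j * q (K - j + 1) + w3\<^sup>2 * r (j - 2) * q (K - j - 1) = q (K + j + 1)"
  using assms(2,3)
proof (induction j rule: int_ge_induct)
  case base
  then show ?case using assms(1) by (simp add: r_neg r_0)
next
  case (step j)
  define I where "I = K - j"
  have I: "I \<ge> 1" using step.prems I_def by simp
  have IH: "w3 * r (j - 2) * q I + r (j - 1) * q (I + 1) = q (K + j - 1)"
           "r j * q I + w3 * r (j - 1) * q (I - 1) = q (K + j)"
           "r j * q (I + 1) + w3\<^sup>2 * r (j - 2) * q (I - 1) = q (K + j + 1)"
    using step by (simp_all add: I_def)
  have rec: "r (j + 1) = w2 * r j + w3\<^sup>2 * r (j - 2)"
            "q (I + 1) = w2 * q (I - 1) + w3 * q (I - 2)"
            "q (K + j + 2) = w2 * q (K + j) + w3 * q (K + j - 1)"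
    using r_rec[of "j + 1"] q_rec[of "I + 1"] q_rec[of "K + j + 2"] step.hyps I I_def
    by simp_all
  have "r (j + 1) * q (I - 1) + w3 * r j * q (I - 2) = q (K + j + 1)"
    unfolding rec IH(3)[symmetric] by algebra
  moreover have "r (j + 1) * q I + w3\<^sup>2 * r (j - 1) * q (I - 2) = q (K + j + 2)"
    by (rule eq_if_plus_2_times_eq[where c = "w2 * w3 * r (j - 1) * q (I - 1)"],
        unfold rec IH(1)[symmetric] IH(2)[symmetric]) algebra
  \<comment> \<open>the first identity for \<open>j + 1\<close> is the second one for \<open>j\<close>\<close>
  ultimately show ?case
    using IH(2) unfolding I_def by (simp add: algebra_simps)
qed

theorem mainTheorem15:
  fixes t :: nat and n i j :: int
  assumes "t \<ge> 2"
    and "2 ^ (t - 1) - 1 \<le> n" and "n \<le> 2 ^ t - 3"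
    and "i = 2 ^ t - 3 - n" and "j = n - 2 ^ (t - 1) + 1"
  shows "w3 * r (j - 2) * q i + r (j - 1) * q (i + 1) = q (n - 2) \<and>
         r j * q i + w3 * r (j - 1) * q (i - 1) = q (n - 1) \<and>
         r j * q (i + 1) + w3\<^sup>2 * r (j - 2) * q (i - 1) = q n"
proof -
  define K :: int where "K = 2 ^ (t - 1) - 2"
  have "(2::int) ^ t = 2 * 2 ^ (t - 1)"
    using assms(1) by (simp flip: power_Suc)
  then have ij: "i = K - j" "n = K + j + 1" "0 \<le> j" "j \<le> K"
    using assms(2-5) unfolding K_def by linarith+
  have "q (K - 1) = 0"
    using q_two_power_minus_3[of "t - 1"] unfolding K_def by simp
  note identities = q_r_identities[OF this ij(3,4)]
  have "n - 2 = K + j - 1" "n - 1 = K + j"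
    using ij(2) by simp_all
  with identities show ?thesis
    unfolding ij(1) by (simp only: ij(2))
qed

end
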